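(* Let $p$ be a prime, $w\ge1$, $\mu\ge1$ an integer. Let $C\subseteq\mathbb{F}_{p^w}^n$ be a linear $[n,k]$ code with $0<k<n$, with parity-check matrix $H\in\mathbb{F}_{p^w}^{(n-k)\times n}$ (a generator matrix of $C^\perp$) having columns $\mathbf h_1^T,\dots,\mathbf h_n^T$, and let $d^\perp$ be the minimum distance of $C^\perp$. Let $[n]=I_1\sqcup I_2\sqcup I_3$ be a partition with $|I_1|=|I_2|=n-d^\perp+1$. Let $\boldsymbol\tau=(\tau^{(1)},\dots,\tau^{(n)})$, $\tau^{(j)}:\mathbb{F}_{p^w}\to\{0,1\}^\mu$. Then \[ SD(\boldsymbol\tau(C),\boldsymbol\tau(\mathcal U_n))\le\frac12\cdot2^{\mu(n-d^\perp+1)}\sum_{(\ell_j)_{j\in I_3}\in(\{0,1\}^\mu)^{I_3}}\ \max_{\boldsymbol\beta\in\mathbb{F}_{p^w}^{n-k}\setminus\{\mathbf 0\}}\ \prod_{j\in I_3}\left|\widehat{\mathbb 1_{\ell_j}}(\langle\boldsymbol\beta,\mathbf h_j\rangle)\right|. \]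
   Context: $\mathrm{Tr}$ is the trace $\mathbb{F}_{p^w}\to\mathbb{F}_p$ (values in $\{0,\dots,p-1\}$), $\omega_p=e^{2\pi\mathbf i/p}$, $\hat f(\alpha)=p^{-w}\sum_xf(x)\omega_p^{\mathrm{Tr}(\alpha x)}$. For $\ell_j\in\{0,1\}^\mu$, $\mathbb 1_{\ell_j}$ is the indicator of $(\tau^{(j)})^{-1}(\ell_j)$. For $S\subseteq\mathbb{F}_{p^w}^n$, $\boldsymbol\tau(S)$ is the distribution of $(\tau^{(j)}(x_j))_j$ with $\mathbf x$ uniform on $S$; $\mathcal U_n=\mathbb{F}_{p^w}^n$; $SD$ is statistical distance. An empty product equals $1$. *)

theory Defs
  imports "HOL-Analysis.Analysis"
begin

text \<open>Vectors in F^n are functions nat => 'a, extensional on {..<n} (indices 0..n-1).\<close>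

definition vecs :: "nat \<Rightarrow> (nat \<Rightarrow> 'a) set" where
  "vecs n = PiE {..<n} (\<lambda>_. UNIV)"

definition trace_fld :: "nat \<Rightarrow> nat \<Rightarrow> 'a::field \<Rightarrow> 'a" where
  "trace_fld p w x = (\<Sum>i<w. x ^ (p ^ i))"

definition trace_val :: "nat \<Rightarrow> nat \<Rightarrow> 'a::field \<Rightarrow> nat" where
  "trace_val p w x = (THE m. m < p \<and> of_nat m = trace_fld p w x)"

definition omega :: "nat \<Rightarrow> complex" where
  "omega p = exp (2 * pi * \<i> / of_nat p)"

definition fourier :: "nat \<Rightarrow> nat \<Rightarrow> ('a::{field,finite} \<Rightarrow> complex) \<Rightarrow> 'a \<Rightarrow> complex" where
  "fourier p w f \<alpha> = (1 / of_nat (p ^ w)) * (\<Sum>x\<in>UNIV. f x * omega p ^ trace_val p w (\<alpha> * x))"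

definition ind_pre :: "('a \<Rightarrow> bool list) \<Rightarrow> bool list \<Rightarrow> 'a \<Rightarrow> complex" where
  "ind_pre t l x = (if t x = l then 1 else 0)"

text \<open>Codewords of the dual code: row space of the (m x n) matrix H, m = n-k.\<close>
definition dual_word :: "nat \<Rightarrow> (nat \<Rightarrow> nat \<Rightarrow> 'a::field) \<Rightarrow> (nat \<Rightarrow> 'a) \<Rightarrow> nat \<Rightarrow> 'a" where
  "dual_word m H \<beta> j = (\<Sum>i<m. \<beta> i * H i j)"

definition weight :: "nat \<Rightarrow> (nat \<Rightarrow> 'a::zero) \<Rightarrow> nat" where
  "weight n v = card {j\<in>{..<n}. v j \<noteq> 0}"

definition dual_min_dist :: "nat \<Rightarrow> nat \<Rightarrow> (nat \<Rightarrow> nat \<Rightarrow> 'a::field) \<Rightarrow> nat" where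
  "dual_min_dist n m H = Min {weight n (dual_word m H \<beta>) | \<beta>.
      \<beta> \<in> vecs m \<and> (\<exists>j<n. dual_word m H \<beta> j \<noteq> 0)}"

definition code_of :: "nat \<Rightarrow> nat \<Rightarrow> (nat \<Rightarrow> nat \<Rightarrow> 'a::field) \<Rightarrow> (nat \<Rightarrow> 'a) set" where
  "code_of n m H = {x \<in> vecs n. \<forall>i<m. (\<Sum>j<n. H i j * x j) = 0}"

text \<open>Rows of H linearly independent (H generates C^perp of dimension m).\<close>
definition rows_indep :: "nat \<Rightarrow> nat \<Rightarrow> (nat \<Rightarrow> nat \<Rightarrow> 'a::field) \<Rightarrow> bool" where
  "rows_indep n m H \<longleftrightarrow> (\<forall>\<beta>\<in>vecs m. (\<forall>j<n. dual_word m H \<beta> j = 0) \<longrightarrow> (\<forall>i<m. \<beta> i = 0))"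

definition tau_vec :: "(nat \<Rightarrow> 'a \<Rightarrow> bool list) \<Rightarrow> nat \<Rightarrow> (nat \<Rightarrow> 'a) \<Rightarrow> nat \<Rightarrow> bool list" where
  "tau_vec \<tau> n x = (\<lambda>j\<in>{..<n}. \<tau> j (x j))"

definition tau_dist :: "(nat \<Rightarrow> 'a \<Rightarrow> bool list) \<Rightarrow> nat \<Rightarrow> (nat \<Rightarrow> 'a) set \<Rightarrow> (nat \<Rightarrow> bool list) \<Rightarrow> real" where
  "tau_dist \<tau> n S z = real (card {x\<in>S. tau_vec \<tau> n x = z}) / real (card S)"

definition bitstrings :: "nat \<Rightarrow> bool list set" where
  "bitstrings \<mu> = {xs. length xs = \<mu>}"

definition SD_tau :: "(nat \<Rightarrow> 'a \<Rightarrow> bool list) \<Rightarrow> nat \<Rightarrow> nat \<Rightarrow> (nat \<Rightarrow> 'a) set \<Rightarrow> (nat \<Rightarrow> 'a) set \<Rightarrow> real" where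
  "SD_tau \<tau> \<mu> n S T = (1/2) * (\<Sum>z\<in>PiE {..<n} (\<lambda>_. bitstrings \<mu>). \<bar>tau_dist \<tau> n S z - tau_dist \<tau> n T z\<bar>)"

end

theory Submission
  imports Defs "HOL-Number_Theory.Residues" "HOL-Computational_Algebra.Polynomial"
begin

(* Poisson summation over the dual code writes the deviation of tau(C) from tau(U) at an output z
   as a sum, over the nonzero dual codewords beta, of products over the coordinates j of Fourier
   coefficients of the fibre indicators of tau_j, evaluated at <beta, h_j>.  The factor over I3 is
   bounded by its maximum over beta.  A nonzero dual codeword vanishes on at most n - d
   coordinates, so beta is determined by its dual codeword restricted to I1, and likewise to I2;
   Cauchy-Schwarz over beta followed by Parseval bounds what remains by the product over
   j in I1 u I2 of sqrt(|tau_j^-1(z_j)| / q).  Summing over z, Cauchy-Schwarz once more lets each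
   coordinate of I1 u I2 contribute at most sqrt(2^mu). *)

section \<open>Finite fields and the trace\<close>

lemma power_card_eq_self:
  fixes x :: "'a::{field,finite}"
  shows "x ^ CARD('a) = x"
proof (cases "x = 0")
  case False
  let ?U = "UNIV - {0::'a}"
  have "(\<Prod>y\<in>?U. x * y) = (\<Prod>y\<in>?U. y)"
    by (rule prod.reindex_bij_witness[of _ "\<lambda>y. y / x" "\<lambda>y. x * y"]) (use False in auto)
  moreover have "(\<Prod>y\<in>?U. y) \<noteq> 0"
    by (simp add: prod_zero_iff)
  ultimately have "x ^ card ?U = 1"
    by (simp add: prod.distrib)
  moreover have "CARD('a) = Suc (card ?U)"
    by (rule card_Suc_Diff1[symmetric]) auto
  ultimately show ?thesis
    by (simp only: power_Suc mult_1_right)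
qed simp

locale prime_power_field =
  fixes p w :: nat and field_type :: "'a::{field,finite} itself"
  assumes prime: "prime p" and w_pos: "w \<ge> 1" and card_field: "CARD('a) = p ^ w"
begin

lemma CHAR_eq: "CHAR('a) = p"
proof -
  have "CHAR('a) > 0"
    by (rule finite_imp_CHAR_pos) simp
  hence prime_CHAR: "prime CHAR('a)"
    by (rule prime_CHAR_semidom)
  have "CHAR('a) dvd p ^ w"
    using CHAR_dvd_CARD[where 'a='a] card_field by simp
  hence "CHAR('a) dvd p"
    using prime_CHAR prime_dvd_power by blast
  thus ?thesis
    using primes_dvd_imp_eq prime_CHAR prime by blast
qed

lemma p_ge_2: "p \<ge> 2"
  using prime prime_ge_2_nat by blast

lemma add_power_p_power: "((x::'a) + y) ^ (p ^ i) = x ^ (p ^ i) + y ^ (p ^ i)"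
  using freshmans_dream'[of "p ^ i" i x y] CHAR_eq prime by simp

lemma sum_power_p: "(\<Sum>i\<in>A. f i :: 'a) ^ p = (\<Sum>i\<in>A. f i ^ p)"
  by (rule freshmans_dream_sum) (simp_all add: CHAR_eq prime)

lemma of_nat_eq_iff_mod: "(of_nat a :: 'a) = of_nat b \<longleftrightarrow> a mod p = b mod p"
  using of_nat_eq_iff_cong_CHAR[where 'a='a, of a b] CHAR_eq by (simp add: cong_def)

lemma of_nat_power_p: "(of_nat m :: 'a) ^ p = of_nat m"
  using sum_power_p[of "\<lambda>_. 1" "{..<m}"] p_ge_2 by simp

lemma fixed_points_power_p: "{y::'a. y ^ p = y} = of_nat ` {..<p}"
proof -
  define P :: "'a poly" where "P = Polynomial.monom 1 p + [:0, -1:]"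
  have deg: "degree P = p"
    unfolding P_def using p_ge_2 by (subst degree_add_eq_left) (simp_all add: degree_monom_eq)
  hence "P \<noteq> 0"
    using p_ge_2 by auto
  have roots: "{y. poly P y = 0} = {y::'a. y ^ p = y}"
    by (auto simp: P_def poly_monom)
  have inj: "inj_on (of_nat :: nat \<Rightarrow> 'a) {..<p}"
    by (auto simp: inj_on_def of_nat_eq_iff_mod)
  have sub: "of_nat ` {..<p} \<subseteq> {y::'a. y ^ p = y}"
    using of_nat_power_p by auto
  have "card {y::'a. y ^ p = y} \<le> card (of_nat ` {..<p} :: 'a set)"
    using card_poly_roots_bound[OF \<open>P \<noteq> 0\<close>] unfolding roots deg card_image[OF inj] card_lessThan .
  then show ?thesis
    by (rule card_seteq[OF finite sub, symmetric])
qed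

lemma trace_fld_add: "trace_fld p w ((x::'a) + y) = trace_fld p w x + trace_fld p w y"
  unfolding trace_fld_def by (simp add: add_power_p_power sum.distrib)

lemma trace_fld_power_p: "trace_fld p w (x::'a) ^ p = trace_fld p w x"
proof -
  have "trace_fld p w x ^ p = (\<Sum>i<w. x ^ p ^ Suc i)"
    unfolding trace_fld_def sum_power_p by (simp add: power_mult[symmetric] mult.commute)
  also have "\<dots> = (\<Sum>i<Suc w. x ^ p ^ i) - x"
    by (simp only: sum.lessThan_Suc_shift) simp
  also have "\<dots> = (\<Sum>i<w. x ^ p ^ i) + x ^ p ^ w - x"
    by simp
  also have "x ^ p ^ w = x"
    using power_card_eq_self[of x] card_field by simp
  finally show ?thesis
    unfolding trace_fld_def by simp
qed

lemma trace_val_spec: "trace_val p w (x::'a) < p \<and> of_nat (trace_val p w x) = trace_fld p w x"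
proof -
  have "trace_fld p w x \<in> of_nat ` {..<p}"
    unfolding fixed_points_power_p[symmetric] by (simp add: trace_fld_power_p)
  then obtain m where m: "m < p" "of_nat m = trace_fld p w x"
    by (metis imageE lessThan_iff)
  have "trace_val p w x = m"
    unfolding trace_val_def
  proof (rule the_equality)
    fix m' assume m': "m' < p \<and> of_nat m' = trace_fld p w x"
    hence "m' mod p = m mod p"
      using m(2) of_nat_eq_iff_mod[of m' m] by simp
    thus "m' = m"
      using m' m by simp
  qed (use m in simp)
  with m show ?thesis
    by simp
qed

lemma trace_val_less: "trace_val p w (x::'a) < p"
  using trace_val_spec by blast

lemma of_nat_trace_val: "of_nat (trace_val p w (x::'a)) = trace_fld p w x"
  using trace_val_spec by blast

lemma trace_val_zero: "trace_val p w (0::'a) = 0"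
proof -
  have "trace_fld p w (0::'a) = 0"
    unfolding trace_fld_def using p_ge_2 by (simp add: power_0_left)
  hence "(of_nat (trace_val p w (0::'a)) :: 'a) = of_nat 0"
    by (simp add: of_nat_trace_val)
  hence "trace_val p w (0::'a) mod p = 0"
    using of_nat_eq_iff_mod[of "trace_val p w (0::'a)" 0] by simp
  thus ?thesis
    using trace_val_less[of 0] by simp
qed

lemma trace_val_add_mod:
  "trace_val p w ((x::'a) + y) mod p = (trace_val p w x + trace_val p w y) mod p"
proof -
  have "(of_nat (trace_val p w (x + y)) :: 'a) = of_nat (trace_val p w x + trace_val p w y)"
    by (simp add: of_nat_trace_val trace_fld_add)
  thus ?thesis
    using of_nat_eq_iff_mod by blast
qed

text \<open>The trace is a nonzero polynomial of degree \<open>p\<^sup>w\<^sup>-\<^sup>1 < |F|\<close>, so it cannot vanish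
  everywhere.\<close>

lemma trace_val_nonzero: "\<exists>x::'a. trace_val p w x \<noteq> 0"
proof (rule ccontr)
  assume "\<not> ?thesis"
  hence zero: "trace_fld p w x = 0" for x :: 'a
    by (metis of_nat_0 of_nat_trace_val)
  define T :: "'a poly" where "T = (\<Sum>i<w. Polynomial.monom 1 (p ^ i))"
  have "Polynomial.coeff T (p ^ (w - 1)) = (\<Sum>i<w. if i = w - 1 then 1 else 0)"
    unfolding T_def coeff_sum coeff_monom using p_ge_2 by (intro sum.cong) (auto simp: power_inject_exp)
  also have "\<dots> = 1"
    using w_pos by simp
  finally have "T \<noteq> 0"
    by auto
  have "degree T \<le> p ^ (w - 1)"
    unfolding T_def using p_ge_2
    by (intro degree_sum_le) (auto intro!: order.trans[OF degree_monom_le] power_increasing)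
  have "{x::'a. poly T x = 0} = UNIV"
    using zero by (simp add: T_def poly_sum poly_monom trace_fld_def)
  hence "CARD('a) \<le> degree T"
    using card_poly_roots_bound[OF \<open>T \<noteq> 0\<close>] by (simp only:)
  hence "p ^ w \<le> p ^ (w - 1)"
    unfolding card_field using \<open>degree T \<le> p ^ (w - 1)\<close> by (rule order.trans)
  hence "w \<le> w - 1"
    using p_ge_2 by (intro power_le_imp_le_exp[of p, OF _ \<open>p ^ w \<le> p ^ (w - 1)\<close>]) simp
  thus False
    using w_pos by simp
qed

end

section \<open>The additive character and Fourier analysis\<close>

lemma omega_power: "omega p ^ a = exp (2 * of_real pi * \<i> * of_nat a / of_nat p)"
  unfolding omega_def exp_of_nat_mult[symmetric] by (simp add: mult_ac)

lemma omega_power_eq_iff: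
  assumes "p > 0"
  shows "omega p ^ a = omega p ^ b \<longleftrightarrow> a mod p = b mod p"
  unfolding omega_power using assms by (intro complex_root_unity_eq) simp

lemma norm_omega_power: "cmod (omega p ^ a) = 1"
  by (simp add: omega_def norm_power norm_exp_eq_Re)

context prime_power_field
begin

definition add_char :: "'a \<Rightarrow> complex" where
  "add_char x = omega p ^ trace_val p w x"

lemma add_char_add: "add_char (x + y) = add_char x * add_char y"
  unfolding add_char_def power_add[symmetric] omega_power_eq_iff[OF prime_gt_0_nat[OF prime]]
  by (rule trace_val_add_mod)

lemma add_char_zero: "add_char 0 = 1"
  by (simp add: add_char_def trace_val_zero)

lemma norm_add_char: "cmod (add_char x) = 1"
  by (simp add: add_char_def norm_omega_power)

lemma add_char_uminus: "add_char (- x) = cnj (add_char x)"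
proof -
  have "add_char (- x) * add_char x = 1"
    by (simp flip: add_char_add add: add_char_zero)
  moreover have "cnj (add_char x) * add_char x = 1"
    using complex_norm_square[of "add_char x"] norm_add_char[of x] by (simp add: mult.commute)
  moreover have "add_char x \<noteq> 0"
    using norm_add_char[of x] by auto
  ultimately show ?thesis
    by (metis mult_right_cancel)
qed

lemma add_char_sum: "add_char (\<Sum>i\<in>A. f i) = (\<Prod>i\<in>A. add_char (f i))"
  by (induction A rule: infinite_finite_induct) (simp_all add: add_char_zero add_char_add)

lemma add_char_nontrivial: "\<exists>x. add_char x \<noteq> 1"
proof -
  obtain x :: 'a where x: "trace_val p w x \<noteq> 0"
    using trace_val_nonzero by blast
  have "add_char x \<noteq> omega p ^ 0"
    unfolding add_char_def omega_power_eq_iff[OF prime_gt_0_nat[OF prime]]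
    using x trace_val_less[of x] by simp
  thus ?thesis
    by auto
qed

text \<open>Translating by a point where the character is not 1 rescales the sum.\<close>

lemma sum_add_char: "(\<Sum>x\<in>UNIV. add_char x) = 0"
proof -
  obtain x0 where x0: "add_char x0 \<noteq> 1"
    using add_char_nontrivial by blast
  have "(\<Sum>x\<in>UNIV. add_char x) = (\<Sum>x\<in>UNIV. add_char (x + x0))"
    by (rule sum.reindex_bij_witness[of _ "\<lambda>x. x + x0" "\<lambda>x. x - x0"]) auto
  also have "\<dots> = add_char x0 * (\<Sum>x\<in>UNIV. add_char x)"
    by (simp add: add_char_add sum_distrib_left mult.commute)
  finally have "(1 - add_char x0) * (\<Sum>x\<in>UNIV. add_char x) = 0"
    by (simp add: algebra_simps)
  thus ?thesis
    using x0 by simp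
qed

lemma sum_add_char_mult:
  "(\<Sum>x\<in>UNIV. add_char (c * x)) = (if c = 0 then of_nat CARD('a) else 0)"
proof (cases "c = 0")
  case False
  have "(\<Sum>x\<in>UNIV. add_char (c * x)) = (\<Sum>x\<in>UNIV. add_char x)"
    by (rule sum.reindex_bij_witness[of _ "\<lambda>x. x / c" "\<lambda>x. c * x"]) (use False in auto)
  thus ?thesis
    using sum_add_char False by simp
qed (simp add: add_char_zero)

lemma fourier_eq:
  fixes g :: "'a \<Rightarrow> complex"
  shows  "fourier p w g a = (\<Sum>x\<in>UNIV. g x * add_char (a * x)) / of_nat CARD('a)"
  unfolding fourier_def card_field add_char_def by simp

lemma fourier_const_one: "fourier p w (\<lambda>_. 1) (a::'a) = (if a = 0 then 1 else 0)"
  using sum_add_char_mult[of a] by (simp add: fourier_eq)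

lemma fourier_mult_cnj:
  fixes g :: "'a \<Rightarrow> complex"
  shows  "fourier p w g a * cnj (fourier p w g a) =
     (\<Sum>x\<in>UNIV. \<Sum>y\<in>UNIV. g x * cnj (g y) * add_char ((x - y) * a)) / of_nat CARD('a) ^ 2"
proof -
  have cnj_fourier: "cnj (fourier p w g a) = (\<Sum>y\<in>UNIV. cnj (g y) * add_char (- (a * y))) / of_nat CARD('a)"
    by (simp add: fourier_eq cnj_sum add_char_uminus)
  have prod_sums: "(\<Sum>x\<in>UNIV. g x * add_char (a * x)) * (\<Sum>y\<in>UNIV. cnj (g y) * add_char (- (a * y))) =
      (\<Sum>x\<in>UNIV. \<Sum>y\<in>UNIV. g x * cnj (g y) * add_char ((x - y) * a))"
    unfolding sum_product
    by (intro sum.cong refl) (simp add: add_char_add[symmetric] algebra_simps)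
  show ?thesis
    unfolding cnj_fourier unfolding fourier_eq times_divide_times_eq power2_eq_square prod_sums ..
qed

theorem parseval:
  fixes g :: "'a \<Rightarrow> complex"
  shows  "(\<Sum>a\<in>UNIV. (cmod (fourier p w g a))\<^sup>2) = (\<Sum>x\<in>UNIV. (cmod (g x))\<^sup>2) / real CARD('a)"
proof -
  let ?q = "of_nat CARD('a) :: complex"
  have diagonal: "(\<Sum>y\<in>UNIV. g x * cnj (g y) * (if x = y then ?q else 0)) = g x * cnj (g x) * ?q" for x
  proof -
    have "(\<Sum>y\<in>UNIV. g x * cnj (g y) * (if x = y then ?q else 0)) =
        (\<Sum>y\<in>UNIV. if y = x then g x * cnj (g y) * ?q else 0)"
      by (intro sum.cong) auto
    thus ?thesis
      by simp
  qed
  have "complex_of_real (\<Sum>a\<in>UNIV. (cmod (fourier p w g a))\<^sup>2) =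
      (\<Sum>a\<in>UNIV. \<Sum>x\<in>UNIV. \<Sum>y\<in>UNIV. g x * cnj (g y) * add_char ((x - y) * a)) / ?q ^ 2"
    by (simp only: of_real_sum complex_norm_square fourier_mult_cnj sum_divide_distrib)
  also have "\<dots> = (\<Sum>x\<in>UNIV. \<Sum>y\<in>UNIV. \<Sum>a\<in>UNIV. g x * cnj (g y) * add_char ((x - y) * a)) / ?q ^ 2"
    by (subst sum.swap, subst (2) sum.swap) (rule refl)
  also have "\<dots> = (\<Sum>x\<in>UNIV. \<Sum>y\<in>UNIV. g x * cnj (g y) * (if x - y = 0 then ?q else 0)) / ?q ^ 2"
    by (simp only: sum_distrib_left[symmetric] sum_add_char_mult)
  also have "\<dots> = (\<Sum>x\<in>UNIV. g x * cnj (g x)) / ?q"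
    by (simp add: diagonal sum_distrib_right[symmetric] power2_eq_square)
  also have "\<dots> = complex_of_real ((\<Sum>x\<in>UNIV. (cmod (g x))\<^sup>2) / real CARD('a))"
    by (simp only: of_real_divide of_real_sum complex_norm_square of_real_of_nat_eq)
  finally show ?thesis
    using of_real_eq_iff by blast
qed

end

section \<open>Vectors and the dual code\<close>

lemma finite_vecs [simp]: "finite (vecs n :: (nat \<Rightarrow> 'a::finite) set)"
  unfolding vecs_def by (intro finite_PiE) auto

lemma card_vecs: "card (vecs n :: (nat \<Rightarrow> 'a::finite) set) = CARD('a) ^ n"
  unfolding vecs_def by (simp add: card_PiE)

lemma sum_vecs_split_zero:
  fixes f :: "(nat \<Rightarrow> 'a::{zero,finite}) \<Rightarrow> 'b::comm_monoid_add"
  shows "(\<Sum>\<beta>\<in>vecs m. f \<beta>) = f (\<lambda>i\<in>{..<m}. 0) + (\<Sum>\<beta>\<in>{\<beta>\<in>vecs m. \<exists>i<m. \<beta> i \<noteq> 0}. f \<beta>)"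
proof -
  let ?N = "{\<beta>\<in>vecs m. \<exists>i<m. \<beta> i \<noteq> (0::'a)}"
  have split: "vecs m = insert (\<lambda>i\<in>{..<m}. 0) ?N"
    unfolding vecs_def by (auto simp: PiE_def extensional_def fun_eq_iff)
  have "sum f (insert (\<lambda>i\<in>{..<m}. 0) ?N) = f (\<lambda>i\<in>{..<m}. 0) + sum f ?N"
    by (rule sum.insert) (auto intro: finite_subset[OF _ finite_vecs])
  thus ?thesis
    unfolding split[symmetric] .
qed

lemma prod_if_zero:
  "finite A \<Longrightarrow> (\<Prod>i\<in>A. if P i then (c::'b::comm_semiring_1) else 0) = (if \<forall>i\<in>A. P i then c ^ card A else 0)"
  by (induction A rule: finite_induct) auto

lemma dual_word_zero_iff:
  assumes "rows_indep n m H" "\<beta> \<in> vecs m"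
  shows "(\<forall>j<n. dual_word m H \<beta> j = 0) \<longleftrightarrow> (\<forall>i<m. \<beta> i = 0)"
  using assms unfolding rows_indep_def dual_word_def by auto

lemma dual_word_diff:
  "dual_word m H (\<lambda>i\<in>{..<m}. \<beta> i - \<beta>' i) j = dual_word m H \<beta> j - dual_word m H \<beta>' j"
  unfolding dual_word_def by (simp add: sum_subtractf left_diff_distrib)

lemma dual_min_dist_le_weight:
  fixes H :: "nat \<Rightarrow> nat \<Rightarrow> 'a::{field,finite}"
  assumes "\<beta> \<in> vecs m" "j < n" "dual_word m H \<beta> j \<noteq> 0"
  shows "dual_min_dist n m H \<le> weight n (dual_word m H \<beta>)"
proof -
  let ?W = "{weight n (dual_word m H \<beta>) | \<beta>. \<beta> \<in> vecs m \<and> (\<exists>j<n. dual_word m H \<beta> j \<noteq> 0)}"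
  have "?W \<subseteq> {..n}"
    unfolding weight_def by (auto intro: order.trans[OF card_mono[of "{..<n}"]])
  hence "finite ?W"
    by (rule finite_subset) simp
  moreover have "weight n (dual_word m H \<beta>) \<in> ?W"
    using assms by blast
  ultimately show ?thesis
    unfolding dual_min_dist_def by (rule Min_le)
qed

lemma weight_le_of_vanishing:
  assumes "I \<subseteq> {..<n}" "\<And>j. j \<in> I \<Longrightarrow> v j = 0"
  shows "weight n v \<le> n - card I"
proof -
  have "weight n v \<le> card ({..<n} - I)"
    unfolding weight_def using assms(2) by (intro card_mono) auto
  also have "\<dots> = n - card I"
    using assms(1) by (simp add: card_Diff_subset finite_subset)
  finally show ?thesis .
qed

text \<open>A nonzero dual codeword has at least \<open>d\<^sup>\<bottom>\<close> nonzero entries, so it cannot vanish on more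
  than \<open>n - d\<^sup>\<bottom>\<close> coordinates: the dual code is determined by its restriction to any larger set.\<close>

lemma inj_on_restrict_dual_word:
  fixes H :: "nat \<Rightarrow> nat \<Rightarrow> 'a::{field,finite}"
  assumes indep: "rows_indep n m H" and I: "I \<subseteq> {..<n}" "n - dual_min_dist n m H < card I"
  shows "inj_on (\<lambda>\<beta>. restrict (dual_word m H \<beta>) I) (vecs m)"
proof (rule inj_onI)
  fix \<beta> \<beta>' :: "nat \<Rightarrow> 'a"
  assume \<beta>: "\<beta> \<in> vecs m" "\<beta>' \<in> vecs m"
    and eq: "restrict (dual_word m H \<beta>) I = restrict (dual_word m H \<beta>') I"
  define \<gamma> where "\<gamma> = (\<lambda>i\<in>{..<m}. \<beta> i - \<beta>' i)"
  have \<gamma>: "\<gamma> \<in> vecs m"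
    unfolding \<gamma>_def vecs_def restrict_PiE_iff by simp
  have vanish: "dual_word m H \<gamma> j = 0" if "j \<in> I" for j
    using fun_cong[OF eq, of j] that unfolding \<gamma>_def dual_word_diff by simp
  have "\<forall>j<n. dual_word m H \<gamma> j = 0"
  proof (rule ccontr)
    assume "\<not> ?thesis"
    then obtain j where "j < n" "dual_word m H \<gamma> j \<noteq> 0"
      by blast
    hence "dual_min_dist n m H \<le> weight n (dual_word m H \<gamma>)"
      by (rule dual_min_dist_le_weight[OF \<gamma>])
    also have "\<dots> \<le> n - card I"
      by (rule weight_le_of_vanishing[OF I(1) vanish])
    moreover have "card I \<le> n"
      using card_mono[OF finite_lessThan I(1)] by simp
    ultimately show False
      using I(2) by linarith
  qed
  hence zero: "\<forall>i<m. \<gamma> i = 0"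
    unfolding dual_word_zero_iff[OF indep \<gamma>] .
  show "\<beta> = \<beta>'"
    using \<beta> zero unfolding vecs_def \<gamma>_def by (intro PiE_ext) auto
qed

section \<open>Poisson summation and the distributions of \<open>\<tau>\<close>\<close>

lemma card_tau_vec_fibre:
  fixes \<tau> :: "nat \<Rightarrow> 'a::finite \<Rightarrow> bool list"
  assumes "S \<subseteq> vecs n" "z \<in> extensional {..<n}"
  shows "(of_nat (card {x\<in>S. tau_vec \<tau> n x = z}) :: complex) =
    (\<Sum>x\<in>S. \<Prod>j<n. ind_pre (\<tau> j) (z j) (x j))"
proof -
  have "finite S"
    using assms(1) by (rule finite_subset) simp
  have "(\<Prod>j<n. ind_pre (\<tau> j) (z j) (x j)) = (if tau_vec \<tau> n x = z then 1 else 0)" for x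
  proof -
    have "tau_vec \<tau> n x = z \<longleftrightarrow> (\<forall>j<n. \<tau> j (x j) = z j)"
      using assms(2) unfolding tau_vec_def by (auto simp: fun_eq_iff extensional_def)
    thus ?thesis
      unfolding ind_pre_def by (simp add: prod_if_zero)
  qed
  hence "(\<Sum>x\<in>S. \<Prod>j<n. ind_pre (\<tau> j) (z j) (x j)) = (\<Sum>x\<in>S. if tau_vec \<tau> n x = z then 1 else 0)"
    by (rule sum.cong[OF refl])
  also have "\<dots> = (\<Sum>x\<in>{x\<in>S. tau_vec \<tau> n x = z}. 1)"
    by (rule sum.inter_filter[symmetric]) fact
  finally show ?thesis
    by simp
qed

context prime_power_field
begin

lemma sum_add_char_linear:
  "(\<Sum>\<beta>\<in>vecs m. add_char (\<Sum>i<m. s i * \<beta> i)) = (if \<forall>i<m. s i = 0 then of_nat CARD('a) ^ m else 0)"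
proof -
  have "(\<Sum>\<beta>\<in>vecs m. add_char (\<Sum>i<m. s i * \<beta> i)) = (\<Sum>\<beta>\<in>vecs m. \<Prod>i<m. add_char (s i * \<beta> i))"
    by (simp only: add_char_sum)
  also have "\<dots> = (\<Prod>i<m. \<Sum>b\<in>UNIV. add_char (s i * b))"
    unfolding vecs_def by (rule prod_sum_PiE[symmetric]) auto
  also have "\<dots> = (\<Prod>i<m. if s i = 0 then of_nat CARD('a) else 0)"
    by (simp only: sum_add_char_mult)
  finally show ?thesis
    by (simp add: prod_if_zero)
qed

lemma prod_fourier:
  fixes g :: "nat \<Rightarrow> 'a \<Rightarrow> complex"
  shows "(\<Prod>j<n. fourier p w (g j) (y j)) =
    (\<Sum>x\<in>vecs n. (\<Prod>j<n. g j (x j)) * add_char (\<Sum>j<n. y j * x j)) / of_nat CARD('a) ^ n"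
proof -
  have "(\<Prod>j<n. \<Sum>t\<in>UNIV. g j t * add_char (y j * t)) =
      (\<Sum>x\<in>vecs n. \<Prod>j<n. g j (x j) * add_char (y j * x j))"
    unfolding vecs_def by (rule prod_sum_PiE) auto
  thus ?thesis
    by (simp add: fourier_eq prod_dividef prod.distrib add_char_sum)
qed

theorem poisson_summation:
  fixes g :: "nat \<Rightarrow> 'a \<Rightarrow> complex" and H :: "nat \<Rightarrow> nat \<Rightarrow> 'a"
  shows "(\<Sum>\<beta>\<in>vecs m. \<Prod>j<n. fourier p w (g j) (dual_word m H \<beta> j)) =
    of_nat CARD('a) ^ m / of_nat CARD('a) ^ n * (\<Sum>x\<in>code_of n m H. \<Prod>j<n. g j (x j))"
proof -
  let ?q = "of_nat CARD('a) :: complex"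
  let ?syn = "\<lambda>x i. \<Sum>j<n. H i j * x j"
  have transpose: "(\<Sum>j<n. dual_word m H \<beta> j * x j) = (\<Sum>i<m. ?syn x i * \<beta> i)" for \<beta> x
    unfolding dual_word_def sum_distrib_right by (subst sum.swap) (simp add: mult_ac)
  have "(\<Sum>\<beta>\<in>vecs m. \<Prod>j<n. fourier p w (g j) (dual_word m H \<beta> j)) =
      (\<Sum>x\<in>vecs n. (\<Prod>j<n. g j (x j)) * (\<Sum>\<beta>\<in>vecs m. add_char (\<Sum>i<m. ?syn x i * \<beta> i))) / ?q ^ n"
    unfolding prod_fourier transpose sum_divide_distrib[symmetric] sum_distrib_left
    by (subst sum.swap) (rule refl)
  also have "\<dots> = (\<Sum>x\<in>vecs n. if \<forall>i<m. ?syn x i = 0 then ?q ^ m * (\<Prod>j<n. g j (x j)) else 0) / ?q ^ n"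
    unfolding sum_add_char_linear by (intro arg_cong[where f="\<lambda>t. t / _"] sum.cong) auto
  also have "(\<Sum>x\<in>vecs n. if \<forall>i<m. ?syn x i = 0 then ?q ^ m * (\<Prod>j<n. g j (x j)) else 0) =
      ?q ^ m * (\<Sum>x\<in>code_of n m H. \<Prod>j<n. g j (x j))"
    unfolding code_of_def sum_distrib_left by (rule sum.inter_filter[symmetric]) simp
  finally show ?thesis
    by (simp only: times_divide_eq_left)
qed

text \<open>Poisson summation for the constant function 1, whose transform is the indicator of 0.\<close>

lemma card_code_of:
  fixes H :: "nat \<Rightarrow> nat \<Rightarrow> 'a"
  assumes "rows_indep n m H"
  shows "(of_nat (card (code_of n m H)) :: complex) = of_nat CARD('a) ^ n / of_nat CARD('a) ^ m"
proof -
  have delta: "(\<Prod>j<n. fourier p w (\<lambda>_. 1) (dual_word m H \<beta> j)) = (if \<forall>i<m. \<beta> i = 0 then 1 else 0)"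
    if "\<beta> \<in> vecs m" for \<beta>
  proof -
    have "(\<Prod>j<n. fourier p w (\<lambda>_. 1) (dual_word m H \<beta> j)) =
        (\<Prod>j<n. if dual_word m H \<beta> j = 0 then 1 else 0)"
      by (simp only: fourier_const_one)
    also have "\<dots> = (if \<forall>j<n. dual_word m H \<beta> j = 0 then 1 else 0)"
      by (simp add: prod_if_zero)
    finally show ?thesis
      unfolding dual_word_zero_iff[OF assms that] .
  qed
  have "(\<Sum>\<beta>\<in>vecs m. \<Prod>j<n. fourier p w (\<lambda>_. 1) (dual_word m H \<beta> j)) =
      (\<Sum>\<beta>\<in>vecs m. if \<forall>i<m. \<beta> i = (0::'a) then 1 else 0)"
    using delta by (rule sum.cong[OF refl])
  also have "\<dots> = 1"
    by (subst sum_vecs_split_zero) (auto intro!: sum.neutral)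
  finally have "1 = of_nat CARD('a) ^ m / of_nat CARD('a) ^ n * (of_nat (card (code_of n m H)) :: complex)"
    unfolding poisson_summation by simp
  thus ?thesis
    by (simp add: divide_simps)
qed

lemma complex_tau_dist:
  fixes S :: "(nat \<Rightarrow> 'a) set"
  assumes "S \<subseteq> vecs n" "z \<in> extensional {..<n}"
  shows "complex_of_real (tau_dist \<tau> n S z) =
    (\<Sum>x\<in>S. \<Prod>j<n. ind_pre (\<tau> j) (z j) (x j)) / of_nat (card S)"
  unfolding tau_dist_def card_tau_vec_fibre[OF assms, symmetric] by simp

lemma tau_dist_code_of:
  fixes H :: "nat \<Rightarrow> nat \<Rightarrow> 'a"
  assumes "rows_indep n m H" "z \<in> extensional {..<n}"
  shows "complex_of_real (tau_dist \<tau> n (code_of n m H) z) =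
    (\<Sum>\<beta>\<in>vecs m. \<Prod>j<n. fourier p w (ind_pre (\<tau> j) (z j)) (dual_word m H \<beta> j))"
proof -
  have "code_of n m H \<subseteq> vecs n"
    unfolding code_of_def by auto
  show ?thesis
    unfolding complex_tau_dist[OF \<open>code_of n m H \<subseteq> vecs n\<close> assms(2)] poisson_summation
      card_code_of[OF assms(1)]
    by (simp only: divide_divide_eq_right times_divide_eq_left mult.commute)
qed

lemma tau_dist_vecs:
  assumes "z \<in> extensional {..<n}"
  shows "complex_of_real (tau_dist \<tau> n (vecs n) z) = (\<Prod>j<n. fourier p w (ind_pre (\<tau> j) (z j)) (0::'a))"
  unfolding complex_tau_dist[OF order.refl assms] prod_fourier card_vecs
  by (simp add: add_char_zero)

text \<open>The zero dual codeword contributes exactly the uniform distribution.\<close>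

lemma tau_dist_code_of_minus_vecs:
  fixes H :: "nat \<Rightarrow> nat \<Rightarrow> 'a"
  assumes "rows_indep n m H" "z \<in> extensional {..<n}"
  shows "complex_of_real (tau_dist \<tau> n (code_of n m H) z - tau_dist \<tau> n (vecs n) z) =
    (\<Sum>\<beta>\<in>{\<beta>\<in>vecs m. \<exists>i<m. \<beta> i \<noteq> 0}. \<Prod>j<n. fourier p w (ind_pre (\<tau> j) (z j)) (dual_word m H \<beta> j))"
proof -
  have "dual_word m H (\<lambda>i\<in>{..<m}. 0) j = 0" for j
    unfolding dual_word_def by simp
  thus ?thesis
    unfolding of_real_diff tau_dist_code_of[OF assms] tau_dist_vecs[OF assms(2)] sum_vecs_split_zero
    by simp
qed

end

lemma prod_sqrt: "(\<Prod>j\<in>A. sqrt (f j)) = sqrt (\<Prod>j\<in>A. f j)"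
  by (induction A rule: infinite_finite_induct) (simp_all add: real_sqrt_mult)

text \<open>If the coordinates in \<open>I\<close> determine \<open>\<beta>\<close>, the products over \<open>B\<close> form a sub-family of all
  products over \<open>I\<close>, whose squares sum to the product of the single-coordinate sums.\<close>

lemma L2_set_prod_le_of_inj_on:
  fixes F :: "nat \<Rightarrow> 'a::finite \<Rightarrow> real" and v :: "'b \<Rightarrow> nat \<Rightarrow> 'a"
  assumes inj: "inj_on (\<lambda>\<beta>. restrict (v \<beta>) I) B" and "finite I"
  shows "L2_set (\<lambda>\<beta>. \<Prod>j\<in>I. F j (v \<beta> j)) B \<le> (\<Prod>j\<in>I. L2_set (F j) UNIV)"
proof -
  define h where "h u = (\<Prod>j\<in>I. (F j (u j))\<^sup>2)" for u :: "nat \<Rightarrow> 'a"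
  have h_nonneg: "h u \<ge> 0" for u
    unfolding h_def by (intro prod_nonneg) auto
  have h_restrict: "h (restrict u I) = h u" for u
    unfolding h_def by (intro prod.cong) auto
  have "(\<Sum>\<beta>\<in>B. (\<Prod>j\<in>I. F j (v \<beta> j))\<^sup>2) = (\<Sum>\<beta>\<in>B. h (restrict (v \<beta>) I))"
    unfolding h_restrict h_def by (simp add: prod_power_distrib)
  also have "\<dots> = (\<Sum>u\<in>(\<lambda>\<beta>. restrict (v \<beta>) I) ` B. h u)"
    using inj by (simp add: sum.reindex)
  also have "\<dots> \<le> (\<Sum>u\<in>PiE I (\<lambda>_. UNIV). h u)"
    using h_nonneg \<open>finite I\<close> by (intro sum_mono2) (auto intro: finite_PiE)
  also have "\<dots> = (\<Prod>j\<in>I. \<Sum>a\<in>UNIV. (F j a)\<^sup>2)"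
    unfolding h_def using \<open>finite I\<close> by (intro prod_sum_PiE[symmetric]) auto
  finally show ?thesis
    unfolding L2_set_def prod_sqrt by (rule real_sqrt_le_mono)
qed

lemma sum_prod_le_max_mult_L2_set:
  fixes a :: "nat \<Rightarrow> 'b \<Rightarrow> real"
  assumes "finite I1" "finite I2" "finite I3" "I1 \<inter> I2 = {}" "(I1 \<union> I2) \<inter> I3 = {}"
    and nonneg: "\<And>j \<beta>. a j \<beta> \<ge> 0"
    and max: "\<And>\<beta>. \<beta> \<in> B \<Longrightarrow> (\<Prod>j\<in>I3. a j \<beta>) \<le> M"
  shows "(\<Sum>\<beta>\<in>B. \<Prod>j\<in>I1 \<union> I2 \<union> I3. a j \<beta>) \<le>
    M * (L2_set (\<lambda>\<beta>. \<Prod>j\<in>I1. a j \<beta>) B * L2_set (\<lambda>\<beta>. \<Prod>j\<in>I2. a j \<beta>) B)"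
proof (cases "B = {}")
  case False
  have "M \<ge> 0"
    using False max nonneg by (meson all_not_in_conv order.trans prod_nonneg)
  have "(\<Sum>\<beta>\<in>B. \<Prod>j\<in>I1 \<union> I2 \<union> I3. a j \<beta>) =
      (\<Sum>\<beta>\<in>B. ((\<Prod>j\<in>I1. a j \<beta>) * (\<Prod>j\<in>I2. a j \<beta>)) * (\<Prod>j\<in>I3. a j \<beta>))"
    using assms(1-5) by (simp add: prod.union_disjoint)
  also have "\<dots> \<le> (\<Sum>\<beta>\<in>B. ((\<Prod>j\<in>I1. a j \<beta>) * (\<Prod>j\<in>I2. a j \<beta>)) * M)"
    using max nonneg by (intro sum_mono mult_left_mono mult_nonneg_nonneg prod_nonneg) auto
  also have "\<dots> = M * (\<Sum>\<beta>\<in>B. \<bar>\<Prod>j\<in>I1. a j \<beta>\<bar> * \<bar>\<Prod>j\<in>I2. a j \<beta>\<bar>)"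
    using nonneg by (simp add: sum_distrib_left mult.commute prod_nonneg)
  also have "\<dots> \<le> M * (L2_set (\<lambda>\<beta>. \<Prod>j\<in>I1. a j \<beta>) B * L2_set (\<lambda>\<beta>. \<Prod>j\<in>I2. a j \<beta>) B)"
    using \<open>M \<ge> 0\<close> by (intro mult_left_mono L2_set_mult_ineq)
  finally show ?thesis .
qed simp

lemma sum_PiE_union_restrict:
  fixes f g :: "('i \<Rightarrow> 'b) \<Rightarrow> 'c::comm_semiring_0"
  assumes "A \<inter> B = {}"
  shows "(\<Sum>z\<in>PiE (A \<union> B) S. f (restrict z A) * g (restrict z B)) = (\<Sum>x\<in>PiE A S. f x) * (\<Sum>y\<in>PiE B S. g y)"
proof -
  have "(\<Sum>x\<in>PiE A S. f x) * (\<Sum>y\<in>PiE B S. g y) = (\<Sum>(x, y)\<in>PiE A S \<times> PiE B S. f x * g y)"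
    by (simp add: sum_product sum.cartesian_product)
  also have "\<dots> = (\<Sum>z\<in>PiE (A \<union> B) S. f (restrict z A) * g (restrict z B))"
    using assms
    by (intro sum.reindex_bij_witness[of _ "\<lambda>z. (restrict z A, restrict z B)" "merge A B"])
       (auto simp: PiE_iff extensional_restrict)
  finally show ?thesis ..
qed

definition preimage_prob :: "('a::finite \<Rightarrow> 'b) \<Rightarrow> 'b \<Rightarrow> real" where
  "preimage_prob t s = real (card {x. t x = s}) / real CARD('a)"

lemma sum_sqrt_preimage_prob_le:
  assumes "\<And>x. t x \<in> S" "finite S"
  shows "(\<Sum>s\<in>S. sqrt (preimage_prob t s)) \<le> sqrt (card S)"
proof -
  have fibres: "(\<Sum>s\<in>S. card {x. t x = s}) = CARD('a)"
    using assms by (subst card_UN_disjoint[symmetric]) (auto intro!: arg_cong[where f=card])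
  have "(\<Sum>s\<in>S. preimage_prob t s) = 1"
    unfolding preimage_prob_def sum_divide_distrib[symmetric] of_nat_sum[symmetric] fibres by simp
  hence "L2_set (\<lambda>s. sqrt (preimage_prob t s)) S = 1"
    unfolding L2_set_def by (simp add: preimage_prob_def)
  thus ?thesis
    using L2_set_mult_ineq[of "\<lambda>s. sqrt (preimage_prob t s)" "\<lambda>_. 1" S]
    by (simp add: L2_set_constant preimage_prob_def)
qed

lemma sum_PiE_prod_sqrt_preimage_prob_le:
  assumes "finite I" "\<And>j x. j \<in> I \<Longrightarrow> t j x \<in> S" "finite S"
  shows "(\<Sum>x\<in>PiE I (\<lambda>_. S). \<Prod>j\<in>I. sqrt (preimage_prob (t j) (x j))) \<le> sqrt (card S) ^ card I"
proof -
  have "(\<Sum>x\<in>PiE I (\<lambda>_. S). \<Prod>j\<in>I. sqrt (preimage_prob (t j) (x j))) =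
      (\<Prod>j\<in>I. \<Sum>s\<in>S. sqrt (preimage_prob (t j) s))"
    using assms by (intro prod_sum_PiE[symmetric]) auto
  also have "\<dots> \<le> (\<Prod>j\<in>I. sqrt (card S))"
    using assms by (intro prod_mono conjI sum_nonneg sum_sqrt_preimage_prob_le) (auto simp: preimage_prob_def)
  finally show ?thesis
    by simp
qed

lemma card_bitstrings: "card (bitstrings \<mu>) = 2 ^ \<mu>" and finite_bitstrings: "finite (bitstrings \<mu>)"
  using card_lists_length_eq[of "UNIV :: bool set" \<mu>] finite_lists_length_eq[of "UNIV :: bool set" \<mu>]
  by (simp_all add: bitstrings_def)

definition max_dual_fourier_prod ::
  "nat \<Rightarrow> nat \<Rightarrow> nat \<Rightarrow> (nat \<Rightarrow> nat \<Rightarrow> 'a::{field,finite}) \<Rightarrow> (nat \<Rightarrow> 'a \<Rightarrow> bool list) \<Rightarrow>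
    nat set \<Rightarrow> (nat \<Rightarrow> bool list) \<Rightarrow> real" where
  "max_dual_fourier_prod p w m H \<tau> I ls =
    Max ((\<lambda>\<beta>. \<Prod>j\<in>I. cmod (fourier p w (ind_pre (\<tau> j) (ls j)) (dual_word m H \<beta> j)))
      ` {\<beta>\<in>vecs m. \<exists>i<m. \<beta> i \<noteq> 0})"

lemma max_dual_fourier_prod_restrict:
  "max_dual_fourier_prod p w m H \<tau> I (restrict ls I) = max_dual_fourier_prod p w m H \<tau> I ls"
  unfolding max_dual_fourier_prod_def by (intro arg_cong[where f=Max] image_cong prod.cong) auto

lemma prod_le_max_dual_fourier_prod:
  assumes "\<beta> \<in> vecs m" "\<exists>i<m. \<beta> i \<noteq> 0"
  shows "(\<Prod>j\<in>I. cmod (fourier p w (ind_pre (\<tau> j) (ls j)) (dual_word m H \<beta> j))) \<le>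
    max_dual_fourier_prod p w m H \<tau> I ls"
  unfolding max_dual_fourier_prod_def using assms
  by (intro Max_ge) (auto intro: finite_subset[OF _ finite_vecs])

text \<open>For \<open>m = 0\<close> the maximum is taken over the empty set and is unspecified.\<close>

lemma max_dual_fourier_prod_nonneg:
  assumes "m > 0"
  shows "max_dual_fourier_prod p w m H \<tau> I ls \<ge> 0"
proof -
  have "(\<lambda>i\<in>{..<m}. 1::'a) \<in> vecs m" "\<exists>i<m. (\<lambda>i\<in>{..<m}. 1::'a) i \<noteq> 0"
    using assms unfolding vecs_def by auto
  hence "(\<Prod>j\<in>I. cmod (fourier p w (ind_pre (\<tau> j) (ls j)) (dual_word m H (\<lambda>i\<in>{..<m}. 1) j))) \<le>
      max_dual_fourier_prod p w m H \<tau> I ls"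
    by (rule prod_le_max_dual_fourier_prod)
  thus ?thesis
    by (rule order.trans[rotated]) (simp add: prod_nonneg)
qed

lemma SD_tau_le_of_pointwise_le:
  assumes "A \<union> B = {..<n}" "A \<inter> B = {}"
    and pointwise: "\<And>z. z \<in> PiE {..<n} (\<lambda>_. bitstrings \<mu>) \<Longrightarrow>
      \<bar>tau_dist \<tau> n S z - tau_dist \<tau> n T z\<bar> \<le> f (restrict z A) * g (restrict z B)"
  shows "SD_tau \<tau> \<mu> n S T \<le>
    1/2 * ((\<Sum>x\<in>PiE A (\<lambda>_. bitstrings \<mu>). f x) * (\<Sum>y\<in>PiE B (\<lambda>_. bitstrings \<mu>). g y))"
proof -
  have "SD_tau \<tau> \<mu> n S T \<le> 1/2 * (\<Sum>z\<in>PiE (A \<union> B) (\<lambda>_. bitstrings \<mu>). f (restrict z A) * g (restrict z B))"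
    unfolding SD_tau_def assms(1) using pointwise by (intro mult_left_mono sum_mono) auto
  thus ?thesis
    unfolding sum_PiE_union_restrict[OF assms(2)] .
qed

context prime_power_field
begin

lemma L2_set_fourier_ind_pre:
  fixes t :: "'a \<Rightarrow> bool list"
  shows "L2_set (\<lambda>a. cmod (fourier p w (ind_pre t l) a)) UNIV = sqrt (preimage_prob t l)"
proof -
  have "(\<Sum>x\<in>UNIV. (cmod (ind_pre t l x))\<^sup>2) = (\<Sum>x\<in>UNIV. if t x = l then 1 else 0)"
    unfolding ind_pre_def by (intro sum.cong) auto
  thus ?thesis
    unfolding L2_set_def parseval preimage_prob_def by (simp add: sum.If_cases)
qed

lemma tau_dist_deviation_le:
  fixes H :: "nat \<Rightarrow> nat \<Rightarrow> 'a" and \<tau> :: "nat \<Rightarrow> 'a \<Rightarrow> bool list"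
  assumes indep: "rows_indep n m H" and "m > 0" and z: "z \<in> extensional {..<n}"
    and part: "I1 \<union> I2 \<union> I3 = {..<n}" "I1 \<inter> I2 = {}" "(I1 \<union> I2) \<inter> I3 = {}"
    and inj: "inj_on (\<lambda>\<beta>. restrict (dual_word m H \<beta>) I1) (vecs m)"
      "inj_on (\<lambda>\<beta>. restrict (dual_word m H \<beta>) I2) (vecs m)"
  shows "\<bar>tau_dist \<tau> n (code_of n m H) z - tau_dist \<tau> n (vecs n) z\<bar> \<le>
    max_dual_fourier_prod p w m H \<tau> I3 z * (\<Prod>j\<in>I1 \<union> I2. sqrt (preimage_prob (\<tau> j) (z j)))"
proof -
  let ?B = "{\<beta>\<in>vecs m. \<exists>i<m. \<beta> i \<noteq> 0}"
  let ?M = "max_dual_fourier_prod p w m H \<tau> I3 z"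
  define a where "a j \<beta> = cmod (fourier p w (ind_pre (\<tau> j) (z j)) (dual_word m H \<beta> j))" for j \<beta>
  have fin: "finite I1" "finite I2" "finite I3"
    using part(1) by (metis finite_Un finite_lessThan)+
  have L2_le: "L2_set (\<lambda>\<beta>. \<Prod>j\<in>I. a j \<beta>) ?B \<le> (\<Prod>j\<in>I. sqrt (preimage_prob (\<tau> j) (z j)))"
    if "inj_on (\<lambda>\<beta>. restrict (dual_word m H \<beta>) I) (vecs m)" "finite I" for I
    using L2_set_prod_le_of_inj_on[where F="\<lambda>j a. cmod (fourier p w (ind_pre (\<tau> j) (z j)) a)",
        OF inj_on_subset[OF that(1)] that(2)]
    unfolding a_def L2_set_fourier_ind_pre by auto
  have "\<bar>tau_dist \<tau> n (code_of n m H) z - tau_dist \<tau> n (vecs n) z\<bar> =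
      cmod (\<Sum>\<beta>\<in>?B. \<Prod>j<n. fourier p w (ind_pre (\<tau> j) (z j)) (dual_word m H \<beta> j))"
    unfolding tau_dist_code_of_minus_vecs[OF indep z, symmetric] norm_of_real ..
  also have "\<dots> \<le> (\<Sum>\<beta>\<in>?B. \<Prod>j\<in>I1 \<union> I2 \<union> I3. a j \<beta>)"
    unfolding part(1) a_def by (rule order.trans[OF norm_sum]) (simp add: prod_norm)
  also have "\<dots> \<le> ?M * (L2_set (\<lambda>\<beta>. \<Prod>j\<in>I1. a j \<beta>) ?B * L2_set (\<lambda>\<beta>. \<Prod>j\<in>I2. a j \<beta>) ?B)"
    using fin part(2,3) unfolding a_def
    by (intro sum_prod_le_max_mult_L2_set prod_le_max_dual_fourier_prod) auto
  also have "\<dots> \<le> ?M * ((\<Prod>j\<in>I1. sqrt (preimage_prob (\<tau> j) (z j))) * (\<Prod>j\<in>I2. sqrt (preimage_prob (\<tau> j) (z j))))"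
    using fin inj \<open>m > 0\<close>
    by (intro mult_left_mono mult_mono L2_le prod_nonneg order.trans[OF L2_set_nonneg L2_le]
        max_dual_fourier_prod_nonneg) (auto simp: preimage_prob_def)
  also have "\<dots> = ?M * (\<Prod>j\<in>I1 \<union> I2. sqrt (preimage_prob (\<tau> j) (z j)))"
    using fin part(2) by (simp add: prod.union_disjoint)
  finally show ?thesis .
qed

lemma SD_tau_code_of_le:
  fixes H :: "nat \<Rightarrow> nat \<Rightarrow> 'a" and \<tau> :: "nat \<Rightarrow> 'a \<Rightarrow> bool list"
  assumes indep: "rows_indep n m H" and "m > 0"
    and part: "I1 \<union> I2 \<union> I3 = {..<n}" "I1 \<inter> I2 = {}" "(I1 \<union> I2) \<inter> I3 = {}"
    and large: "n - dual_min_dist n m H < card I1" "n - dual_min_dist n m H < card I2"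
    and len: "\<And>j x. j < n \<Longrightarrow> length (\<tau> j x) = \<mu>"
  shows "SD_tau \<tau> \<mu> n (code_of n m H) (vecs n) \<le>
    1/2 * sqrt (2 ^ \<mu>) ^ (card I1 + card I2) *
    (\<Sum>ls\<in>PiE I3 (\<lambda>_. bitstrings \<mu>). max_dual_fourier_prod p w m H \<tau> I3 ls)"
proof -
  let ?u = "\<lambda>j s. sqrt (preimage_prob (\<tau> j) s)"
  let ?M = "max_dual_fourier_prod p w m H \<tau> I3"
  have I: "I1 \<subseteq> {..<n}" "I2 \<subseteq> {..<n}" "finite I1" "finite I2"
    using part(1) finite_subset[of _ "{..<n}"] by blast+
  have inj: "inj_on (\<lambda>\<beta>. restrict (dual_word m H \<beta>) I1) (vecs m)"
    "inj_on (\<lambda>\<beta>. restrict (dual_word m H \<beta>) I2) (vecs m)"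
    using inj_on_restrict_dual_word[OF indep] I(1,2) large by blast+
  have "SD_tau \<tau> \<mu> n (code_of n m H) (vecs n) \<le>
      1/2 * ((\<Sum>x\<in>PiE (I1 \<union> I2) (\<lambda>_. bitstrings \<mu>). \<Prod>j\<in>I1 \<union> I2. ?u j (x j)) *
        (\<Sum>ls\<in>PiE I3 (\<lambda>_. bitstrings \<mu>). ?M ls))"
  proof (rule SD_tau_le_of_pointwise_le[OF part(1,3)])
    fix z assume "z \<in> PiE {..<n} (\<lambda>_. bitstrings \<mu>)"
    hence "z \<in> extensional {..<n}"
      by (simp add: PiE_iff)
    hence "\<bar>tau_dist \<tau> n (code_of n m H) z - tau_dist \<tau> n (vecs n) z\<bar> \<le> ?M z * (\<Prod>j\<in>I1 \<union> I2. ?u j (z j))"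
      by (rule tau_dist_deviation_le[OF indep \<open>m > 0\<close> _ part inj])
    moreover have "(\<Prod>j\<in>I1 \<union> I2. ?u j (restrict z (I1 \<union> I2) j)) = (\<Prod>j\<in>I1 \<union> I2. ?u j (z j))"
      by (intro prod.cong) auto
    ultimately show "\<bar>tau_dist \<tau> n (code_of n m H) z - tau_dist \<tau> n (vecs n) z\<bar> \<le>
        (\<Prod>j\<in>I1 \<union> I2. ?u j (restrict z (I1 \<union> I2) j)) * ?M (restrict z I3)"
      by (simp add: max_dual_fourier_prod_restrict mult.commute)
  qed
  also have "\<dots> \<le> 1/2 * (sqrt (card (bitstrings \<mu>)) ^ card (I1 \<union> I2) * (\<Sum>ls\<in>PiE I3 (\<lambda>_. bitstrings \<mu>). ?M ls))"
    using I len \<open>m > 0\<close>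
    by (intro mult_left_mono mult_right_mono sum_PiE_prod_sqrt_preimage_prob_le sum_nonneg
        max_dual_fourier_prod_nonneg) (use finite_bitstrings[of \<mu>] in \<open>auto simp: bitstrings_def\<close>)
  finally show ?thesis
    using I part(2) by (simp add: card_bitstrings card_Un_disjoint mult.assoc)
qed

end

theorem lemma4p6:
  fixes p w \<mu> n k :: nat
    and H :: "nat \<Rightarrow> nat \<Rightarrow> 'a::{field,finite}"
    and \<tau> :: "nat \<Rightarrow> 'a \<Rightarrow> bool list"
    and I1 I2 I3 :: "nat set"
  assumes "prime p" and "w \<ge> 1" and "CARD('a) = p ^ w" and "\<mu> \<ge> 1"
    and "0 < k" and "k < n"
    and "rows_indep n (n - k) H"
    and "I1 \<union> I2 \<union> I3 = {..<n}" and "I1 \<inter> I2 = {}" and "I1 \<inter> I3 = {}" and "I2 \<inter> I3 = {}"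
    and "card I1 = n - dual_min_dist n (n - k) H + 1"
    and "card I2 = n - dual_min_dist n (n - k) H + 1"
    and "\<And>j x. j < n \<Longrightarrow> length (\<tau> j x) = \<mu>"
  shows "SD_tau \<tau> \<mu> n (code_of n (n - k) H) (vecs n) \<le>
    (1/2) * 2 ^ (\<mu> * (n - dual_min_dist n (n - k) H + 1)) *
    (\<Sum>ls\<in>PiE I3 (\<lambda>_. bitstrings \<mu>).
       Max ((\<lambda>\<beta>. \<Prod>j\<in>I3. cmod (fourier p w (ind_pre (\<tau> j) (ls j)) (dual_word (n - k) H \<beta> j)))
            ` {\<beta>\<in>vecs (n - k). \<exists>i<n - k. \<beta> i \<noteq> 0}))"
proof -
  interpret prime_power_field p w "TYPE('a)"
    using assms(1-3) by unfold_locales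
  let ?c = "n - dual_min_dist n (n - k) H + 1"
  have "SD_tau \<tau> \<mu> n (code_of n (n - k) H) (vecs n) \<le>
      1/2 * sqrt (2 ^ \<mu>) ^ (card I1 + card I2) *
      (\<Sum>ls\<in>PiE I3 (\<lambda>_. bitstrings \<mu>). max_dual_fourier_prod p w (n - k) H \<tau> I3 ls)"
    by (rule SD_tau_code_of_le) (use assms(5-14) in auto)
  also have "sqrt (2 ^ \<mu>) ^ (card I1 + card I2) = (2::real) ^ (\<mu> * ?c)"
    unfolding assms(12,13) mult_2[symmetric] power_mult by (simp add: power_mult)
  finally show ?thesis
    unfolding max_dual_fourier_prod_def .
qed

end
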